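(* Let $A=\mathbb{C}[x]/(x^2)$ and $M=A/(x)$. Then $\Gamma(M)\cong A[y]/(xy)$ with $y$ of degree $1$, and $\Gamma(M)^\vee$ is isomorphic to the subring $A[xT,xT^2,xT^3,\dots]$ of $\Gamma(A)^\vee\cong A[T]$. In particular the algebra $\Gamma(M)^\vee$ is not generated in degree $1$ and is not finitely generated as an $A$-algebra, so $\operatorname{Sym}(M^\ast)\to\Gamma(M)^\vee$ is not surjective.
   Context: The algebra of divided powers $\Gamma(N)$ of an $A$-module $N$ is $A[X(n,x)]_{(n,x)\in\mathbb{N}\times N}$ modulo the ideal generated by $X(0,x)-1$, $X(n,fx)-f^nX(n,x)$, $X(m,x)X(n,x)-\binom{m+n}{m}X(m+n,x)$, and $X(n,x+y)-\sum_{i+j=n}X(i,x)X(j,y)$, graded with $X(n,x)$ in degree $n$. Its graded dual $\Gamma(N)^\vee=\bigoplus_n\operatorname{Hom}_A(\Gamma^n(N),A)$ is a graded $A$-algebra with product $(u\bullet v)(\gamma)=(u\otimes v)(\Delta(\gamma))$, where $\Delta$ is the comultiplication induced by the diagonal $N\to N\oplus N$, $\gamma^n_N(x)\mapsto\sum_{i+j=n}\gamma^i_N(x)\otimes\gamma^j_N(x)$. The map $\operatorname{Sym}(M^\ast)\to\Gamma(M)^\vee$ is induced by identifying $M^\ast$ with the degree $1$ part of $\Gamma(M)^\vee$. *)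

theory Defs
  imports Complex_Main "HOL-Library.Poly_Mapping" "HOL-Computational_Algebra.Polynomial"
begin

section \<open>The base ring A = C[x]/(x^2) (dual numbers a + b x)\<close>

datatype dualnum = Dual (re: complex) (du: complex)

instantiation dualnum :: comm_ring_1
begin
definition "0 = Dual 0 0"
definition "1 = Dual 1 0"
definition "a + b = Dual (re a + re b) (du a + du b)"
definition "- a = Dual (- re a) (- du a)"
definition "a - b = Dual (re a - re b) (du a - du b)"
definition "a * b = Dual (re a * re b) (re a * du b + du a * re b)"
instance
  by standard (simp_all add: dualnum.expand zero_dualnum_def one_dualnum_def plus_dualnum_def
      uminus_dualnum_def minus_dualnum_def times_dualnum_def algebra_simps)
end

definition xeps :: dualnum where "xeps = Dual 0 1"

definition modrel :: "dualnum \<Rightarrow> dualnum \<Rightarrow> bool" where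
  "modrel a b \<longleftrightarrow> (\<exists>c. a - b = c * xeps)"

lemma modrel_iff: "modrel a b \<longleftrightarrow> re a = re b"
proof
  assume "modrel a b" then obtain c where "a - b = c * xeps" by (auto simp: modrel_def)
  then have "re (a - b) = re (c * xeps)" by simp
  then show "re a = re b" by (simp add: minus_dualnum_def times_dualnum_def xeps_def)
next
  assume h: "re a = re b"
  have "a - b = Dual (du a - du b) 0 * xeps"
    using h by (simp add: dualnum.expand minus_dualnum_def times_dualnum_def xeps_def)
  then show "modrel a b" by (auto simp: modrel_def)
qed

quotient_type modx = dualnum / modrel
  by (auto intro!: equivpI reflpI sympI transpI simp: modrel_iff)

instantiation modx :: ab_group_add
begin
lift_definition zero_modx :: modx is "0 :: dualnum" .
lift_definition plus_modx :: "modx \<Rightarrow> modx \<Rightarrow> modx" is "(+)"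
  by (simp add: modrel_iff plus_dualnum_def)
lift_definition uminus_modx :: "modx \<Rightarrow> modx" is uminus
  by (simp add: modrel_iff uminus_dualnum_def)
lift_definition minus_modx :: "modx \<Rightarrow> modx \<Rightarrow> modx" is "(-)"
  by (simp add: modrel_iff minus_dualnum_def)
instance
  by standard (transfer; simp add: modrel_iff algebra_simps)+
end

lift_definition modx_smul :: "dualnum \<Rightarrow> modx \<Rightarrow> modx" is "(*)"
  by (simp add: modrel_iff times_dualnum_def)

text \<open>The polynomial ring A[X(n,x)], (n,x) in nat x N.\<close>
type_synonym ('a, 'm) dpoly = "((nat \<times> 'm) \<Rightarrow>\<^sub>0 nat) \<Rightarrow>\<^sub>0 'a"

definition Xv :: "nat \<Rightarrow> 'm \<Rightarrow> ('a::comm_ring_1, 'm) dpoly" where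
  "Xv n x = Poly_Mapping.single (Poly_Mapping.single (n, x) 1) 1"

definition Cst :: "'a::comm_ring_1 \<Rightarrow> ('a, 'm) dpoly" where
  "Cst a = Poly_Mapping.single 0 a"

definition gen_ideal :: "'r::comm_ring_1 set \<Rightarrow> 'r set" where
  "gen_ideal S = {\<Sum>i<k. r i * s i | (k::nat) r s. \<forall>i<k. s i \<in> S}"

definition dp_rels :: "('a::comm_ring_1 \<Rightarrow> 'm::ab_group_add \<Rightarrow> 'm) \<Rightarrow> ('a, 'm) dpoly set" where
  "dp_rels smul =
     {Xv 0 x - 1 | x. True}
   \<union> {Xv n (smul f x) - Cst (f ^ n) * Xv n x | n f x. True}
   \<union> {Xv m x * Xv n x - Cst (of_nat (m + n choose m)) * Xv (m + n) x | m n x. True}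
   \<union> {Xv n (x + y) - (\<Sum>i\<le>n. Xv i x * Xv (n - i) y) | n x y. True}"

text \<open>Gamma(N) = A[X(n,x)] / dp_ideal.\<close>
definition dp_ideal :: "('a::comm_ring_1 \<Rightarrow> 'm::ab_group_add \<Rightarrow> 'm) \<Rightarrow> ('a, 'm) dpoly set" where
  "dp_ideal smul = gen_ideal (dp_rels smul)"

definition mdeg :: "((nat \<times> 'm) \<Rightarrow>\<^sub>0 nat) \<Rightarrow> nat" where
  "mdeg m = (\<Sum>v\<in>Poly_Mapping.keys m. fst v * Poly_Mapping.lookup m v)"

definition homog :: "nat \<Rightarrow> ('a::comm_ring_1, 'm) dpoly \<Rightarrow> bool" where
  "homog n p \<longleftrightarrow> (\<forall>m\<in>Poly_Mapping.keys p. mdeg m = n)"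

definition peval :: "('v \<Rightarrow> 'r::comm_ring_1) \<Rightarrow> ('a::comm_ring_1 \<Rightarrow> 'r) \<Rightarrow> (('v \<Rightarrow>\<^sub>0 nat) \<Rightarrow>\<^sub>0 'a) \<Rightarrow> 'r" where
  "peval f c p = (\<Sum>m\<in>Poly_Mapping.keys p. c (Poly_Mapping.lookup p m) * (\<Prod>v\<in>Poly_Mapping.keys m. f v ^ Poly_Mapping.lookup m v))"

text \<open>A[X(n,x)] tensor_A A[X(n,x)] identified with the polynomial ring in two copies
  of the variables (True = left factor, False = right factor).\<close>
definition X2 :: "bool \<Rightarrow> nat \<Rightarrow> 'm \<Rightarrow> ((bool \<times> nat \<times> 'm) \<Rightarrow>\<^sub>0 nat) \<Rightarrow>\<^sub>0 'a::comm_ring_1" where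
  "X2 b n x = Poly_Mapping.single (Poly_Mapping.single (b, n, x) 1) 1"

text \<open>Comultiplication induced by the diagonal: X(n,x) maps to sum_{i+j=n} X(i,x) (x) X(j,x).\<close>
definition comult :: "('a::comm_ring_1, 'm) dpoly \<Rightarrow> ((bool \<times> nat \<times> 'm) \<Rightarrow>\<^sub>0 nat) \<Rightarrow>\<^sub>0 'a" where
  "comult p = peval (\<lambda>(n, x). \<Sum>i\<le>n. X2 True i x * X2 False (n - i) x)
                    (\<lambda>a. Poly_Mapping.single 0 a) p"

text \<open>(u (x) v) applied to an element of the tensor square.\<close>
definition tensor_app ::
  "(('a::comm_ring_1, 'm) dpoly \<Rightarrow> 'a) \<Rightarrow> (('a, 'm) dpoly \<Rightarrow> 'a)
     \<Rightarrow> (((bool \<times> nat \<times> 'm) \<Rightarrow>\<^sub>0 nat) \<Rightarrow>\<^sub>0 'a) \<Rightarrow> 'a" where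
  "tensor_app u v q = (\<Sum>m\<in>Poly_Mapping.keys q. Poly_Mapping.lookup q m
      * u (\<Prod>w\<in>{w\<in>Poly_Mapping.keys m. fst w}. Xv (fst (snd w)) (snd (snd w)) ^ Poly_Mapping.lookup m w)
      * v (\<Prod>w\<in>{w\<in>Poly_Mapping.keys m. \<not> fst w}. Xv (fst (snd w)) (snd (snd w)) ^ Poly_Mapping.lookup m w))"

text \<open>An element of the graded dual = an A-linear functional on Gamma(N)
  (i.e. on A[X(n,x)] vanishing on the ideal) vanishing on Gamma^n(N) for all large n.\<close>
definition gdual :: "('a::comm_ring_1 \<Rightarrow> 'm::ab_group_add \<Rightarrow> 'm) \<Rightarrow> (('a, 'm) dpoly \<Rightarrow> 'a) set" where
  "gdual smul = {u. (\<forall>p q. u (p + q) = u p + u q) \<and> (\<forall>a p. u (Cst a * p) = a * u p)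
                   \<and> (\<forall>p\<in>dp_ideal smul. u p = 0)
                   \<and> (\<exists>N. \<forall>n\<ge>N. \<forall>p. homog n p \<longrightarrow> u p = 0)}"

definition dhomog :: "nat \<Rightarrow> (('a::comm_ring_1, 'm) dpoly \<Rightarrow> 'a) \<Rightarrow> bool" where
  "dhomog n u \<longleftrightarrow> (\<forall>k p. k \<noteq> n \<longrightarrow> homog k p \<longrightarrow> u p = 0)"

definition dprod :: "(('a::comm_ring_1, 'm) dpoly \<Rightarrow> 'a) \<Rightarrow> (('a, 'm) dpoly \<Rightarrow> 'a) \<Rightarrow> ('a, 'm) dpoly \<Rightarrow> 'a" where
  "dprod u v = (\<lambda>p. tensor_app u v (comult p))"

text \<open>Unit of the graded dual: the augmentation Gamma(N) -> Gamma^0(N) = A.\<close>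
definition dunit :: "('a::comm_ring_1, 'm) dpoly \<Rightarrow> 'a" where
  "dunit = peval (\<lambda>(n, x). if n = 0 then 1 else 0) (\<lambda>a. a)"

inductive_set dsubalg :: "(('a::comm_ring_1, 'm) dpoly \<Rightarrow> 'a) set \<Rightarrow> (('a, 'm) dpoly \<Rightarrow> 'a) set"
  for G where
  unit: "(\<lambda>p. a * dunit p) \<in> dsubalg G"
| gen: "u \<in> G \<Longrightarrow> u \<in> dsubalg G"
| add: "u \<in> dsubalg G \<Longrightarrow> v \<in> dsubalg G \<Longrightarrow> (\<lambda>p. u p + v p) \<in> dsubalg G"
| smul: "u \<in> dsubalg G \<Longrightarrow> (\<lambda>p. a * u p) \<in> dsubalg G"
| mult: "u \<in> dsubalg G \<Longrightarrow> v \<in> dsubalg G \<Longrightarrow> dprod u v \<in> dsubalg G"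

inductive_set palg :: "'a::comm_ring_1 poly set \<Rightarrow> 'a poly set" for G where
  const: "[:a:] \<in> palg G"
| gen: "g \<in> G \<Longrightarrow> g \<in> palg G"
| add: "f \<in> palg G \<Longrightarrow> g \<in> palg G \<Longrightarrow> f + g \<in> palg G"
| mult: "f \<in> palg G \<Longrightarrow> g \<in> palg G \<Longrightarrow> f * g \<in> palg G"

text \<open>phi : A[X(n,x)] -> A[y] is a graded A-algebra map inducing an isomorphism
  Gamma(N) = A[X(n,x)]/dp_ideal  ~=  A[y]/J  (y in degree 1, J homogeneous).\<close>
definition gamma_quot_iso ::
  "('a::comm_ring_1 \<Rightarrow> 'm::ab_group_add \<Rightarrow> 'm) \<Rightarrow> (('a, 'm) dpoly \<Rightarrow> 'a poly) \<Rightarrow> 'a poly set \<Rightarrow> bool" where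
  "gamma_quot_iso smul \<phi> J \<longleftrightarrow>
     (\<forall>p q. \<phi> (p + q) = \<phi> p + \<phi> q \<and> \<phi> (p * q) = \<phi> p * \<phi> q)
   \<and> (\<forall>a. \<phi> (Cst a) = [:a:])
   \<and> (\<forall>p. \<phi> p \<in> J \<longleftrightarrow> p \<in> dp_ideal smul)
   \<and> (\<forall>q. \<exists>p. \<phi> p - q \<in> J)
   \<and> (\<forall>n p. homog n p \<longrightarrow> (\<exists>c. \<phi> p - monom c n \<in> J))"

definition dual_iso ::
  "('a::comm_ring_1 \<Rightarrow> 'm::ab_group_add \<Rightarrow> 'm) \<Rightarrow> ((('a, 'm) dpoly \<Rightarrow> 'a) \<Rightarrow> 'a poly) \<Rightarrow> 'a poly set \<Rightarrow> bool" where
  "dual_iso smul \<Phi> S \<longleftrightarrow>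
     bij_betw \<Phi> (gdual smul) S
   \<and> (\<forall>u\<in>gdual smul. \<forall>v\<in>gdual smul.
        \<Phi> (\<lambda>p. u p + v p) = \<Phi> u + \<Phi> v \<and> \<Phi> (dprod u v) = \<Phi> u * \<Phi> v)
   \<and> (\<forall>a. \<forall>u\<in>gdual smul. \<Phi> (\<lambda>p. a * u p) = smult a (\<Phi> u))
   \<and> (\<forall>u\<in>gdual smul. \<forall>n. dhomog n u \<longleftrightarrow> (\<exists>c. \<Phi> u = monom c n))"

end

theory Submission
  imports Defs
begin

text \<open>
  Both A and M = A/(x) are cyclic A-modules, generated by the class x0 of 1. The relations
  X(n, a x0) = a^n X(n, x0) and X(m, x0) X(n, x0) = binom(m + n, m) X(m + n, x0) make every element
  of Gamma(N) congruent to an A-combination of the X(k, x0). Hence a functional u in the graded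
  dual is determined by the coefficients u(X(k, x0)), and by the shape of the comultiplication
  the product of the dual is the Cauchy product of these coefficient sequences, so
  u \<mapsto> \<Sum> u(X(k, x0)) T^k embeds the dual into A[T].
  The evaluation X(n, y) \<mapsto> E(y)^n T^n / n!, where E is the identity of A resp. the section
  M = C \<subseteq> A, kills the relations of Gamma(A) and maps those of Gamma(M) into the ideal (xT);
  pairing with the basis T^k / k! then provides all functionals.
  In Gamma(M) we have x X(1, x0) = X(1, x x0) = X(1, 0) = 0 and therefore x X(k, x0) = 0 for all
  k \<ge> 1: this gives Gamma(M) = A[y]/(xy), and forces the coefficients of positive degree of a
  dual element into (x), i.e. Gamma(M)^v = A[xT, xT^2, \<dots>].
  Since x^2 = 0, products of such elements whose coefficients vanish above degree D still vanish
  above D, whereas xT^(D+1) lies in the dual; so no set of generators of bounded degree,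
  in particular neither the degree 1 part nor a finite set, generates the dual.
\<close>

lemma gen_ideal_0: "0 \<in> gen_ideal S"
  unfolding gen_ideal_def by (rule CollectI, rule exI[of _ 0]) auto

lemma gen_ideal_gen: "s \<in> S \<Longrightarrow> s \<in> gen_ideal S"
  unfolding gen_ideal_def
  by (rule CollectI, rule exI[of _ 1], rule exI[of _ "\<lambda>_. 1"], rule exI[of _ "\<lambda>_. s"]) auto

lemma gen_ideal_add:
  assumes "a \<in> gen_ideal S" "b \<in> gen_ideal S"
  shows "a + b \<in> gen_ideal S"
proof -
  obtain k :: nat and r s where a: "a = (\<Sum>i<k. r i * s i)" "\<forall>i<k. s i \<in> S"
    using assms(1) by (auto simp: gen_ideal_def)
  obtain l :: nat and r' s' where b: "b = (\<Sum>i<l. r' i * s' i)" "\<forall>i<l. s' i \<in> S"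
    using assms(2) by (auto simp: gen_ideal_def)
  define R where "R i = (if i < k then r i else r' (i - k))" for i
  define T where "T i = (if i < k then s i else s' (i - k))" for i
  have "(\<Sum>i<k + l. R i * T i) = (\<Sum>i<k. R i * T i) + (\<Sum>i<l. R (k + i) * T (k + i))"
    by (induction l) (simp_all add: add.assoc)
  also have "\<dots> = a + b"
    using a b by (simp add: R_def T_def)
  finally have "a + b = (\<Sum>i<k + l. R i * T i)" by simp
  moreover have "\<forall>i<k + l. T i \<in> S"
    using a b by (auto simp: T_def)
  ultimately show ?thesis
    unfolding gen_ideal_def by blast
qed

lemma gen_ideal_mult_left:
  assumes "a \<in> gen_ideal S"
  shows "c * a \<in> gen_ideal S"
proof -
  obtain k :: nat and r s where a: "a = (\<Sum>i<k. r i * s i)" "\<forall>i<k. s i \<in> S"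
    using assms by (auto simp: gen_ideal_def)
  have "c * a = (\<Sum>i<k. (c * r i) * s i)"
    using a by (simp add: sum_distrib_left mult.assoc)
  then show ?thesis
    using a unfolding gen_ideal_def
    by (intro CollectI exI[of _ k] exI[of _ "\<lambda>i. c * r i"] exI[of _ s]) simp
qed

lemma gen_ideal_mult_right: "a \<in> gen_ideal S \<Longrightarrow> a * c \<in> gen_ideal S"
  using gen_ideal_mult_left[of a S c] by (simp add: mult.commute)

lemma gen_ideal_diff: "a \<in> gen_ideal S \<Longrightarrow> b \<in> gen_ideal S \<Longrightarrow> a - b \<in> gen_ideal S"
  using gen_ideal_add[of a S "- b"] gen_ideal_mult_left[of b S "- 1"] by simp

lemma gen_ideal_sum: "(\<And>i. i \<in> K \<Longrightarrow> f i \<in> gen_ideal S) \<Longrightarrow> sum f K \<in> gen_ideal S"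
  by (induction K rule: infinite_finite_induct) (auto intro: gen_ideal_0 gen_ideal_add)

lemma gen_ideal_induct [consumes 1, case_names zero add gen]:
  assumes "h \<in> gen_ideal S" "P 0" "\<And>a b. P a \<Longrightarrow> P b \<Longrightarrow> P (a + b)"
    "\<And>r s. s \<in> S \<Longrightarrow> P (r * s)"
  shows "P h"
proof -
  obtain k :: nat and r s where h: "h = (\<Sum>i<k. r i * s i)" "\<forall>i<k. s i \<in> S"
    using assms(1) by (auto simp: gen_ideal_def)
  have "P (\<Sum>i<j. r i * s i)" if "j \<le> k" for j
    using that by (induction j) (auto intro!: assms(3,4) simp: assms(2) h(2))
  then show ?thesis
    using h by simp
qed

lemma gen_ideal_hom_image:
  assumes "a \<in> gen_ideal S"
    and "h 0 = 0" "\<And>p q. h (p + q) = h p + h q" "\<And>p q. h (p * q) = h p * h q"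
    and "\<And>s. s \<in> S \<Longrightarrow> h s \<in> gen_ideal T"
  shows "h a \<in> gen_ideal T"
  using assms(1)
  by (induction rule: gen_ideal_induct)
     (simp_all add: assms(2-5) gen_ideal_0 gen_ideal_add gen_ideal_mult_left)

lemma gen_ideal_singleton_0: "gen_ideal {0::'a::comm_ring_1} = {0}"
  by (auto simp: gen_ideal_def intro: exI[of _ 0])

lemma poly_mapping_sum_single:
  "p = (\<Sum>m\<in>Poly_Mapping.keys p. Poly_Mapping.single m (Poly_Mapping.lookup p m))"
  by (rule poly_mapping_eqI)
     (simp add: lookup_sum lookup_single when_def in_keys_iff sum.delta' split: if_splits)

lemma Cst_mult: "Cst a * Cst b = Cst (a * b)"
  by (simp add: Cst_def mult_single)

lemma Cst_add: "Cst (a + b) = Cst a + Cst b"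
  by (simp add: Cst_def single_add)

lemma Cst_0 [simp]: "Cst 0 = 0"
  by (simp add: Cst_def)

lemma Cst_1 [simp]: "Cst 1 = 1"
  by (simp add: Cst_def)

lemma Cst_sum: "Cst (sum f K) = (\<Sum>i\<in>K. Cst (f i))"
  by (induction K rule: infinite_finite_induct) (auto simp: Cst_add)

lemma single_eq_Cst_mult: "Poly_Mapping.single m a = Cst a * Poly_Mapping.single m 1"
  by (simp add: Cst_def mult_single)

lemma keys_add_nat:
  fixes m1 m2 :: "'v \<Rightarrow>\<^sub>0 nat"
  shows "Poly_Mapping.keys (m1 + m2) = Poly_Mapping.keys m1 \<union> Poly_Mapping.keys m2"
  by (auto simp: in_keys_iff lookup_add)

lemma monomial_induct [case_names zero add]:
  fixes m :: "'v \<Rightarrow>\<^sub>0 nat"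
  assumes zero: "P 0" and add: "\<And>m v. P m \<Longrightarrow> P (m + Poly_Mapping.single v 1)"
  shows "P m"
proof -
  have add_power: "P (m + Poly_Mapping.single v k)" if "P m" for m v k
  proof (induction k)
    case (Suc k)
    have "m + Poly_Mapping.single v (Suc k) = m + Poly_Mapping.single v k + Poly_Mapping.single v 1"
      by (simp add: single_add[symmetric] add.assoc)
    then show ?case
      using add[OF Suc] by simp
  qed (simp add: that)
  show ?thesis
  proof (induction m rule: update_induct)
    case (update m v k)
    have "Poly_Mapping.update v k m = m + Poly_Mapping.single v k"
      using update(1) by (intro poly_mapping_eqI)
        (auto simp: lookup_update lookup_add in_keys_iff lookup_single when_def)
    then show ?case
      using add_power[OF update(3)] by simp
  qed (rule zero)
qed

lemma mdeg_add: "mdeg (m1 + m2) = mdeg m1 + mdeg m2"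
proof -
  let ?K = "Poly_Mapping.keys m1 \<union> Poly_Mapping.keys m2"
  have on_K: "mdeg m = (\<Sum>v\<in>?K. fst v * Poly_Mapping.lookup m v)" if "Poly_Mapping.keys m \<subseteq> ?K" for m
    unfolding mdeg_def using that by (intro sum.mono_neutral_left) (auto simp: in_keys_iff)
  show ?thesis
    using on_K[of "m1 + m2"] on_K[of m1] on_K[of m2]
    by (simp add: keys_add_nat lookup_add sum.distrib algebra_simps)
qed

lemma mdeg_0 [simp]: "mdeg 0 = 0"
  by (simp add: mdeg_def)

lemma mdeg_single [simp]: "mdeg (Poly_Mapping.single (n, x) k) = n * k"
  by (simp add: mdeg_def)

definition eval_monomial :: "('v \<Rightarrow> 'r::comm_ring_1) \<Rightarrow> ('v \<Rightarrow>\<^sub>0 nat) \<Rightarrow> 'r" where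
  "eval_monomial f m = (\<Prod>v\<in>Poly_Mapping.keys m. f v ^ Poly_Mapping.lookup m v)"

lemma eval_monomial_add: "eval_monomial f (m1 + m2) = eval_monomial f m1 * eval_monomial f m2"
proof -
  let ?K = "Poly_Mapping.keys m1 \<union> Poly_Mapping.keys m2"
  have on_K: "eval_monomial f m = (\<Prod>v\<in>?K. f v ^ Poly_Mapping.lookup m v)"
    if "Poly_Mapping.keys m \<subseteq> ?K" for m
    unfolding eval_monomial_def using that by (intro prod.mono_neutral_left) (auto simp: in_keys_iff)
  show ?thesis
    using on_K[of "m1 + m2"] on_K[of m1] on_K[of m2]
    by (simp add: keys_add_nat lookup_add prod.distrib power_add)
qed

lemma eval_monomial_0 [simp]: "eval_monomial f 0 = 1"
  by (simp add: eval_monomial_def)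

lemma eval_monomial_single [simp]: "eval_monomial f (Poly_Mapping.single v k) = f v ^ k"
  by (simp add: eval_monomial_def)

lemma peval_eq_sum_eval_monomial:
  "peval f c p = (\<Sum>m\<in>Poly_Mapping.keys p. c (Poly_Mapping.lookup p m) * eval_monomial f m)"
  by (simp add: peval_def eval_monomial_def)

lemma peval_Xv: "peval f c (Xv n x) = c 1 * f (n, x)"
  by (simp add: Xv_def peval_eq_sum_eval_monomial)

locale coeff_hom =
  fixes c :: "'a::comm_ring_1 \<Rightarrow> 'r::comm_ring_1"
  assumes c_add: "c (a + b) = c a + c b" and c_mult: "c (a * b) = c a * c b" and c_1: "c 1 = 1"
begin

lemma c_0: "c 0 = 0"
  using c_add[of 0 0] by simp

lemma peval_0: "peval f c 0 = 0"
  by (simp add: peval_def)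

lemma peval_add: "peval f c (p + q) = peval f c p + peval f c q"
  unfolding peval_eq_sum_eval_monomial
  by (rule setsum_keys_plus_distrib) (auto simp: c_0 c_add lookup_add algebra_simps)

lemma peval_diff: "peval f c (p - q) = peval f c p - peval f c q"
  using peval_add[of f "p - q" q] by simp

lemma peval_sum: "peval f c (sum g K) = (\<Sum>i\<in>K. peval f c (g i))"
  by (induction K rule: infinite_finite_induct) (auto simp: peval_0 peval_add)

lemma peval_single: "peval f c (Poly_Mapping.single m a) = c a * eval_monomial f m"
  by (simp add: peval_eq_sum_eval_monomial c_0)

lemma peval_mult: "peval f c (p * q) = peval f c p * peval f c q"
proof -
  have "p * q = (\<Sum>m\<in>Poly_Mapping.keys p. \<Sum>m'\<in>Poly_Mapping.keys q.
      Poly_Mapping.single (m + m') (Poly_Mapping.lookup p m * Poly_Mapping.lookup q m'))"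
    by (subst (1) poly_mapping_sum_single[of p], subst (1) poly_mapping_sum_single[of q])
       (simp add: sum_product mult_single)
  then have "peval f c (p * q) = (\<Sum>m\<in>Poly_Mapping.keys p. \<Sum>m'\<in>Poly_Mapping.keys q.
      c (Poly_Mapping.lookup p m) * eval_monomial f m * (c (Poly_Mapping.lookup q m') * eval_monomial f m'))"
    by (simp add: peval_sum peval_single c_mult eval_monomial_add mult_ac)
  also have "\<dots> = peval f c p * peval f c q"
    by (simp add: peval_eq_sum_eval_monomial sum_product)
  finally show ?thesis .
qed

lemma peval_Cst: "peval f c (Cst a) = c a"
  by (simp add: Cst_def peval_single)

lemma peval_1: "peval f c 1 = 1"
  by (simp add: peval_eq_sum_eval_monomial c_1)

end

context
  fixes smul :: "'a::comm_ring_1 \<Rightarrow> 'm::ab_group_add \<Rightarrow> 'm"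
begin

lemma dp_rel_X0: "Xv 0 x - 1 \<in> dp_ideal smul"
  unfolding dp_ideal_def by (rule gen_ideal_gen) (auto simp: dp_rels_def)

lemma dp_rel_smul: "Xv n (smul f x) - Cst (f ^ n) * Xv n x \<in> dp_ideal smul"
  unfolding dp_ideal_def by (rule gen_ideal_gen) (unfold dp_rels_def, blast)

lemma dp_rel_mult: "Xv m x * Xv n x - Cst (of_nat (m + n choose m)) * Xv (m + n) x \<in> dp_ideal smul"
  unfolding dp_ideal_def by (rule gen_ideal_gen) (unfold dp_rels_def, blast)

lemma dp_ideal_0: "0 \<in> dp_ideal smul"
  unfolding dp_ideal_def by (rule gen_ideal_0)

lemma dp_ideal_add: "p \<in> dp_ideal smul \<Longrightarrow> q \<in> dp_ideal smul \<Longrightarrow> p + q \<in> dp_ideal smul"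
  unfolding dp_ideal_def by (rule gen_ideal_add)

lemma dp_ideal_diff: "p \<in> dp_ideal smul \<Longrightarrow> q \<in> dp_ideal smul \<Longrightarrow> p - q \<in> dp_ideal smul"
  unfolding dp_ideal_def by (rule gen_ideal_diff)

lemma dp_ideal_mult_left: "p \<in> dp_ideal smul \<Longrightarrow> r * p \<in> dp_ideal smul"
  unfolding dp_ideal_def by (rule gen_ideal_mult_left)

lemma dp_ideal_mult_right: "p \<in> dp_ideal smul \<Longrightarrow> p * r \<in> dp_ideal smul"
  unfolding dp_ideal_def by (rule gen_ideal_mult_right)

lemma dp_ideal_sum: "(\<And>i. i \<in> K \<Longrightarrow> f i \<in> dp_ideal smul) \<Longrightarrow> sum f K \<in> dp_ideal smul"
  unfolding dp_ideal_def by (rule gen_ideal_sum)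

definition dp_cong :: "('a, 'm) dpoly \<Rightarrow> ('a, 'm) dpoly \<Rightarrow> bool" where
  "dp_cong p q \<longleftrightarrow> p - q \<in> dp_ideal smul"

lemma dp_cong_refl: "dp_cong p p"
  by (simp add: dp_cong_def dp_ideal_0)

lemma dp_cong_trans [trans]: "dp_cong p q \<Longrightarrow> dp_cong q r \<Longrightarrow> dp_cong p r"
  unfolding dp_cong_def using dp_ideal_add by fastforce

lemma dp_cong_add: "dp_cong p p' \<Longrightarrow> dp_cong q q' \<Longrightarrow> dp_cong (p + q) (p' + q')"
  unfolding dp_cong_def using dp_ideal_add by (fastforce simp: algebra_simps)

lemma dp_cong_mult:
  assumes "dp_cong p p'" "dp_cong q q'"
  shows "dp_cong (p * q) (p' * q')"
proof -
  have "(p - p') * q + p' * (q - q') \<in> dp_ideal smul"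
    using assms unfolding dp_cong_def by (intro dp_ideal_add dp_ideal_mult_left dp_ideal_mult_right)
  then show ?thesis
    unfolding dp_cong_def by (simp add: algebra_simps)
qed

lemma dp_cong_sum: "(\<And>i. i \<in> K \<Longrightarrow> dp_cong (f i) (g i)) \<Longrightarrow> dp_cong (sum f K) (sum g K)"
  by (induction K rule: infinite_finite_induct) (auto intro: dp_cong_refl dp_cong_add)

lemma dp_cong_ideal_iff: "dp_cong p q \<Longrightarrow> p \<in> dp_ideal smul \<longleftrightarrow> q \<in> dp_ideal smul"
  unfolding dp_cong_def using dp_ideal_diff dp_ideal_add by fastforce

lemma dp_cong_Xv_mult:
  "dp_cong (Xv i x * Xv j x) (Cst (of_nat (i + j choose i)) * Xv (i + j) x)"
  unfolding dp_cong_def by (rule dp_rel_mult)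

end

locale dp_cyclic =
  fixes smul :: "'a::comm_ring_1 \<Rightarrow> 'm::ab_group_add \<Rightarrow> 'm" and x0 :: 'm
  assumes cyclic: "\<And>x. \<exists>a. x = smul a x0"
begin

lemma dp_cong_Xv_generator: "\<exists>b. dp_cong smul (Xv n x) (Cst b * Xv n x0)"
proof -
  obtain a where "x = smul a x0"
    using cyclic by blast
  then show ?thesis
    using dp_rel_smul[where smul = smul and n = n and f = a and x = x0] by (auto simp: dp_cong_def)
qed

lemma dp_cong_monomial:
  "\<exists>b. dp_cong smul (Poly_Mapping.single m 1) (Cst b * Xv (mdeg m) x0)"
proof (induction m rule: monomial_induct)
  case zero
  have "dp_cong smul 1 (Xv 0 x0)"
    using dp_rel_X0[where smul = smul and x = x0] dp_ideal_diff[OF dp_ideal_0] unfolding dp_cong_def by fastforce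
  then show ?case
    by (intro exI[of _ 1]) simp
next
  case (add m v)
  obtain n x where v: "v = (n, x)"
    by fastforce
  obtain b where b: "dp_cong smul (Poly_Mapping.single m 1) (Cst b * Xv (mdeg m) x0)"
    using add by blast
  obtain b' where b': "dp_cong smul (Xv n x) (Cst b' * Xv n x0)"
    using dp_cong_Xv_generator by blast
  have "Poly_Mapping.single (m + Poly_Mapping.single v 1) (1::'a) = Poly_Mapping.single m 1 * Xv n x"
    by (simp add: v Xv_def mult_single)
  then have "dp_cong smul (Poly_Mapping.single (m + Poly_Mapping.single v 1) 1)
      (Cst (b * b') * (Xv (mdeg m) x0 * Xv n x0))"
    using dp_cong_mult[OF b b'] by (simp add: Cst_mult[symmetric] mult_ac)
  also have "dp_cong smul \<dots> (Cst (b * b') * (Cst (of_nat (mdeg m + n choose mdeg m)) * Xv (mdeg m + n) x0))"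
    by (intro dp_cong_mult dp_cong_refl dp_cong_Xv_mult)
  finally show ?case
    by (auto simp: v mdeg_add Cst_mult mult.assoc[symmetric])
qed

lemma dp_cong_expansion:
  obtains b where "dp_cong smul p
    (\<Sum>m\<in>Poly_Mapping.keys p. Cst (Poly_Mapping.lookup p m * b m) * Xv (mdeg m) x0)"
proof -
  obtain b where b: "\<And>m. dp_cong smul (Poly_Mapping.single m 1) (Cst (b m) * Xv (mdeg m) x0)"
    using dp_cong_monomial by metis
  have "p = (\<Sum>m\<in>Poly_Mapping.keys p. Cst (Poly_Mapping.lookup p m) * Poly_Mapping.single m 1)"
    by (subst poly_mapping_sum_single) (simp add: single_eq_Cst_mult[symmetric])
  also have "dp_cong smul \<dots>
      (\<Sum>m\<in>Poly_Mapping.keys p. Cst (Poly_Mapping.lookup p m) * (Cst (b m) * Xv (mdeg m) x0))"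
    by (intro dp_cong_sum dp_cong_mult dp_cong_refl b)
  finally show ?thesis
    by (intro that[of b]) (simp add: mult.assoc[symmetric] Cst_mult)
qed

lemma dp_cong_Xv_combination: "\<exists>c N. dp_cong smul p (\<Sum>k<N. Cst (c k) * Xv k x0)"
proof -
  obtain b where b: "dp_cong smul p
      (\<Sum>m\<in>Poly_Mapping.keys p. Cst (Poly_Mapping.lookup p m * b m) * Xv (mdeg m) x0)"
    using dp_cong_expansion by blast
  define N where "N = Suc (Max (mdeg ` Poly_Mapping.keys p))"
  define c where "c k = (\<Sum>m | m \<in> Poly_Mapping.keys p \<and> mdeg m = k. Poly_Mapping.lookup p m * b m)" for k
  have "mdeg ` Poly_Mapping.keys p \<subseteq> {..<N}"
    by (auto simp: N_def le_imp_less_Suc)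
  then have "(\<Sum>m\<in>Poly_Mapping.keys p. Cst (Poly_Mapping.lookup p m * b m) * Xv (mdeg m) x0)
      = (\<Sum>k<N. \<Sum>m | m \<in> Poly_Mapping.keys p \<and> mdeg m = k.
           Cst (Poly_Mapping.lookup p m * b m) * Xv (mdeg m) x0)"
    by (intro sum.group[symmetric]) auto
  also have "\<dots> = (\<Sum>k<N. Cst (c k) * Xv k x0)"
    by (auto simp: c_def Cst_sum sum_distrib_right intro!: sum.cong)
  finally show ?thesis
    using b by auto
qed

end

section \<open>The graded dual\<close>

lemma gdualD:
  assumes "u \<in> gdual smul"
  shows "u (p + q) = u p + u q" "u (Cst a * p) = a * u p" "p \<in> dp_ideal smul \<Longrightarrow> u p = 0"
    "\<exists>N. \<forall>n\<ge>N. \<forall>p. homog n p \<longrightarrow> u p = 0"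
  using assms by (auto simp: gdual_def)

lemma gdual_0: "u \<in> gdual smul \<Longrightarrow> u 0 = 0"
  using gdualD(1)[of u smul 0 0] by simp

lemma gdual_sum: "u \<in> gdual smul \<Longrightarrow> u (sum f K) = (\<Sum>i\<in>K. u (f i))"
  by (induction K rule: infinite_finite_induct) (auto simp: gdual_0 gdualD(1))

lemma gdual_dp_cong: "u \<in> gdual smul \<Longrightarrow> dp_cong smul p q \<Longrightarrow> u p = u q"
  using gdualD(1)[of u smul "p - q" q] gdualD(3)[of u smul "p - q"] by (simp add: dp_cong_def)

lemma homog_Xv: "homog n (Xv n x)"
  by (simp add: homog_def Xv_def)

lemma gdual_Xv_eventually_0:
  assumes "u \<in> gdual smul"
  shows "\<exists>N. \<forall>k\<ge>N. u (Xv k x) = 0"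
proof -
  obtain N where N: "\<forall>n\<ge>N. \<forall>p. homog n p \<longrightarrow> u p = 0"
    using gdualD(4)[OF assms] by blast
  show ?thesis
    by (rule exI[of _ N]) (auto intro: N[rule_format] homog_Xv)
qed

lemma gdual_finite_common_bound:
  assumes "finite G" "G \<subseteq> gdual smul"
  shows "\<exists>D. \<forall>g\<in>G. \<forall>k>D. g (Xv k x) = 0"
  using assms
proof (induction G rule: finite_induct)
  case (insert g G)
  obtain D where "\<forall>h\<in>G. \<forall>k>D. h (Xv k x) = 0"
    using insert.IH insert.prems by blast
  moreover obtain N where "\<forall>k\<ge>N. g (Xv k x) = 0"
    using gdual_Xv_eventually_0[of g smul] insert.prems by blast
  ultimately show ?case
    by (intro exI[of _ "D + N"]) auto
qed simp

context dp_cyclic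
begin

lemma gdual_expansion:
  obtains b where "\<And>u. u \<in> gdual smul \<Longrightarrow>
    u p = (\<Sum>m\<in>Poly_Mapping.keys p. Poly_Mapping.lookup p m * b m * u (Xv (mdeg m) x0))"
proof -
  obtain b where b: "dp_cong smul p
      (\<Sum>m\<in>Poly_Mapping.keys p. Cst (Poly_Mapping.lookup p m * b m) * Xv (mdeg m) x0)"
    using dp_cong_expansion by blast
  show ?thesis
  proof (rule that)
    fix u assume u: "u \<in> gdual smul"
    have "u p = u (\<Sum>m\<in>Poly_Mapping.keys p. Cst (Poly_Mapping.lookup p m * b m) * Xv (mdeg m) x0)"
      by (rule gdual_dp_cong[OF u b])
    also have "\<dots> = (\<Sum>m\<in>Poly_Mapping.keys p. Poly_Mapping.lookup p m * b m * u (Xv (mdeg m) x0))"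
      by (simp add: gdual_sum[OF u] gdualD(2)[OF u])
    finally show "u p = \<dots>" .
  qed
qed

lemma gdual_eqI:
  assumes u: "u \<in> gdual smul" and v: "v \<in> gdual smul" and coeffs: "\<And>k. u (Xv k x0) = v (Xv k x0)"
  shows "u = v"
proof
  fix p
  obtain b where b: "\<And>w. w \<in> gdual smul \<Longrightarrow>
      w p = (\<Sum>m\<in>Poly_Mapping.keys p. Poly_Mapping.lookup p m * b m * w (Xv (mdeg m) x0))"
    using gdual_expansion[where p = p] by blast
  show "u p = v p"
    by (simp only: b[OF u] b[OF v] coeffs)
qed

lemma gdual_homog_eq_0:
  assumes u: "u \<in> gdual smul" and "homog n p" "u (Xv n x0) = 0"
  shows "u p = 0"
proof -
  obtain b where b: "\<And>w. w \<in> gdual smul \<Longrightarrow>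
      w p = (\<Sum>m\<in>Poly_Mapping.keys p. Poly_Mapping.lookup p m * b m * w (Xv (mdeg m) x0))"
    using gdual_expansion[where p = p] by blast
  have "(\<Sum>m\<in>Poly_Mapping.keys p. Poly_Mapping.lookup p m * b m * u (Xv (mdeg m) x0)) = 0"
    using assms(2,3) by (intro sum.neutral) (simp add: homog_def)
  then show ?thesis
    by (simp only: b[OF u])
qed

end

lemma tensor_app_0: "tensor_app u v 0 = 0"
  by (simp add: tensor_app_def)

lemma tensor_app_add: "tensor_app u v (p + q) = tensor_app u v p + tensor_app u v q"
  unfolding tensor_app_def
  by (rule setsum_keys_plus_distrib) (auto simp: lookup_add algebra_simps)

lemma tensor_app_sum: "tensor_app u v (sum f K) = (\<Sum>i\<in>K. tensor_app u v (f i))"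
  by (induction K rule: infinite_finite_induct) (auto simp: tensor_app_0 tensor_app_add)

lemma tensor_app_single_1:
  "tensor_app u v (Poly_Mapping.single M (1::'a::comm_ring_1)) =
    u (\<Prod>w\<in>{w\<in>Poly_Mapping.keys M. fst w}. Xv (fst (snd w)) (snd (snd w)) ^ Poly_Mapping.lookup M w)
    * v (\<Prod>w\<in>{w\<in>Poly_Mapping.keys M. \<not> fst w}. Xv (fst (snd w)) (snd (snd w)) ^ Poly_Mapping.lookup M w)"
proof -
  have "(\<Sum>m\<in>{M}. f m) = f M" for f :: "_ \<Rightarrow> 'a"
    by simp
  then show ?thesis
    unfolding tensor_app_def by (simp only: keys_single lookup_single_eq if_False one_neq_zero mult_1)
qed

lemma tensor_app_X2: "tensor_app u v (X2 True i x * X2 False j x) = u (Xv i x) * v (Xv j x)"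
proof -
  let ?M = "Poly_Mapping.single (True, i, x) 1 + Poly_Mapping.single (False, j, x) (1::nat)"
  have eq: "X2 True i x * X2 False j x = Poly_Mapping.single ?M 1"
    unfolding X2_def mult_single by simp
  have keys: "Poly_Mapping.keys ?M = {(True, i, x), (False, j, x)}"
    by (simp add: keys_add_nat insert_commute)
  have left: "{w \<in> Poly_Mapping.keys ?M. fst w} = {(True, i, x)}"
    and right: "{w \<in> Poly_Mapping.keys ?M. \<not> fst w} = {(False, j, x)}"
    unfolding keys by auto
  show ?thesis
    unfolding eq tensor_app_single_1 left right by (simp add: lookup_add lookup_single)
qed

lemma dprod_Xv: "dprod u v (Xv k x) = (\<Sum>i\<le>k. u (Xv i x) * v (Xv (k - i) x))"
  by (simp add: dprod_def comult_def peval_Xv tensor_app_sum tensor_app_X2)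

lemma dunit_Xv: "dunit (Xv k x) = (if k = 0 then 1 else 0)"
  by (simp add: dunit_def peval_Xv)

definition dual_coeffs :: "'m \<Rightarrow> (('a::comm_ring_1, 'm) dpoly \<Rightarrow> 'a) \<Rightarrow> 'a poly" where
  "dual_coeffs x0 u = Abs_poly (\<lambda>k. u (Xv k x0))"

lemma coeff_dual_coeffs:
  assumes "\<exists>N. \<forall>k\<ge>N. u (Xv k x0) = 0"
  shows "coeff (dual_coeffs x0 u) k = u (Xv k x0)"
proof -
  obtain N where "\<forall>k\<ge>N. u (Xv k x0) = 0"
    using assms by blast
  then have "\<forall>\<^sub>\<infinity>k. u (Xv k x0) = 0"
    unfolding MOST_nat using less_imp_le by blast
  then show ?thesis
    unfolding dual_coeffs_def by (subst Abs_poly_inverse) auto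
qed

lemma coeff_dual_coeffs_gdual: "u \<in> gdual smul \<Longrightarrow> coeff (dual_coeffs x0 u) k = u (Xv k x0)"
  by (rule coeff_dual_coeffs) (rule gdual_Xv_eventually_0)

lemma dual_coeffs_add:
  assumes "u \<in> gdual smul" "v \<in> gdual smul"
  shows "dual_coeffs x0 (\<lambda>p. u p + v p) = dual_coeffs x0 u + dual_coeffs x0 v"
proof -
  obtain N1 N2 where "\<forall>k\<ge>N1. u (Xv k x0) = 0" "\<forall>k\<ge>N2. v (Xv k x0) = 0"
    using gdual_Xv_eventually_0 assms by metis
  then have "\<exists>N. \<forall>k\<ge>N. u (Xv k x0) + v (Xv k x0) = 0"
    by (intro exI[of _ "N1 + N2"]) simp
  then show ?thesis
    using assms by (intro poly_eqI) (simp add: coeff_dual_coeffs coeff_dual_coeffs_gdual)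
qed

lemma dual_coeffs_smul:
  assumes "u \<in> gdual smul"
  shows "dual_coeffs x0 (\<lambda>p. a * u p) = smult a (dual_coeffs x0 u)"
proof -
  obtain N where "\<forall>k\<ge>N. u (Xv k x0) = 0"
    using gdual_Xv_eventually_0 assms by metis
  then have "\<exists>N. \<forall>k\<ge>N. a * u (Xv k x0) = 0"
    by (intro exI[of _ N]) simp
  then show ?thesis
    using assms by (intro poly_eqI) (simp add: coeff_dual_coeffs coeff_dual_coeffs_gdual)
qed

lemma dual_coeffs_dprod:
  assumes "u \<in> gdual smul" "v \<in> gdual smul"
  shows "dual_coeffs x0 (dprod u v) = dual_coeffs x0 u * dual_coeffs x0 v"
proof -
  obtain N1 N2 where N1: "\<forall>k\<ge>N1. u (Xv k x0) = 0" and N2: "\<forall>k\<ge>N2. v (Xv k x0) = 0"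
    using gdual_Xv_eventually_0 assms by metis
  have "\<exists>N. \<forall>k\<ge>N. dprod u v (Xv k x0) = 0"
  proof (intro exI allI impI)
    fix k assume k: "N1 + N2 \<le> k"
    show "dprod u v (Xv k x0) = 0"
      unfolding dprod_Xv
    proof (rule sum.neutral, rule ballI)
      fix i assume "i \<in> {..k}"
      then have "i \<ge> N1 \<or> k - i \<ge> N2"
        using k by auto
      then show "u (Xv i x0) * v (Xv (k - i) x0) = 0"
        using N1 N2 by auto
    qed
  qed
  then show ?thesis
    using assms by (intro poly_eqI)
      (simp only: coeff_dual_coeffs[OF \<open>\<exists>N. \<forall>k\<ge>N. dprod u v (Xv k x0) = 0\<close>] coeff_dual_coeffs_gdual coeff_mult dprod_Xv)
qed

lemma (in dp_cyclic) dual_iso_dual_coeffs: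
  assumes into: "\<And>u. u \<in> gdual smul \<Longrightarrow> dual_coeffs x0 u \<in> S"
    and onto: "\<And>f. f \<in> S \<Longrightarrow> \<exists>u\<in>gdual smul. dual_coeffs x0 u = f"
  shows "dual_iso smul (dual_coeffs x0) S"
  unfolding dual_iso_def
proof (intro conjI ballI allI)
  have "inj_on (dual_coeffs x0) (gdual smul)"
  proof (rule inj_onI)
    fix u v assume u: "u \<in> gdual smul" and v: "v \<in> gdual smul"
      and eq: "dual_coeffs x0 u = dual_coeffs x0 v"
    show "u = v"
      by (rule gdual_eqI[OF u v])
        (metis eq coeff_dual_coeffs_gdual[OF u] coeff_dual_coeffs_gdual[OF v])
  qed
  then show "bij_betw (dual_coeffs x0) (gdual smul) S"
    using into onto by (auto simp: bij_betw_def)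
next
  fix u n assume u: "u \<in> gdual smul"
  show "dhomog n u \<longleftrightarrow> (\<exists>c. dual_coeffs x0 u = monom c n)"
  proof
    assume "dhomog n u"
    then have "u (Xv k x0) = 0" if "k \<noteq> n" for k
      using that homog_Xv[of k x0] unfolding dhomog_def by blast
    then have "dual_coeffs x0 u = monom (u (Xv n x0)) n"
      by (intro poly_eqI) (simp add: coeff_dual_coeffs_gdual[OF u] coeff_monom)
    then show "\<exists>c. dual_coeffs x0 u = monom c n" ..
  next
    assume "\<exists>c. dual_coeffs x0 u = monom c n"
    then obtain c where c: "dual_coeffs x0 u = monom c n" ..
    have "u (Xv k x0) = 0" if "k \<noteq> n" for k
      using arg_cong[OF c, of "\<lambda>f. coeff f k"] that by (simp add: coeff_dual_coeffs_gdual[OF u] coeff_monom)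
    then show "dhomog n u"
      unfolding dhomog_def using gdual_homog_eq_0[OF u] by blast
  qed
qed (simp_all add: dual_coeffs_add dual_coeffs_smul dual_coeffs_dprod)

lemma dualnum_mult: "Dual a b * Dual c d = Dual (a * c) (a * d + b * c)"
  by (simp add: times_dualnum_def)

lemma dualnum_add: "Dual a b + Dual c d = Dual (a + c) (b + d)"
  by (simp add: plus_dualnum_def)

lemma dualnum_0: "(0::dualnum) = Dual 0 0"
  by (simp add: zero_dualnum_def)

lemma dualnum_1: "(1::dualnum) = Dual 1 0"
  by (simp add: one_dualnum_def)

lemma re_mult [simp]: "re (x * y) = re x * re y"
  by (simp add: times_dualnum_def)

lemma re_add [simp]: "re (x + y) = re x + re y"
  by (simp add: plus_dualnum_def)

lemma re_diff [simp]: "re (x - y) = re x - re y"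
  by (simp add: minus_dualnum_def)

lemma re_0 [simp]: "re 0 = 0"
  by (simp add: zero_dualnum_def)

lemma re_1 [simp]: "re 1 = 1"
  by (simp add: one_dualnum_def)

lemma re_power [simp]: "re (x ^ n) = re x ^ n"
  by (induction n) auto

lemma re_sum: "re (sum f K) = (\<Sum>i\<in>K. re (f i))"
  by (induction K rule: infinite_finite_induct) auto

lemma dualnum_of_nat: "(of_nat n :: dualnum) = Dual (of_nat n) 0"
  by (induction n) (simp_all add: dualnum_0 dualnum_1 dualnum_add)

lemma re_xeps [simp]: "re xeps = 0"
  by (simp add: xeps_def)

lemma xeps_neq_0: "xeps \<noteq> 0"
  by (simp add: xeps_def dualnum_0)

lemma re_eq_0_iff_xeps_dvd: "re a = 0 \<longleftrightarrow> (\<exists>c. a = xeps * c)"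
proof
  assume "re a = 0"
  then have "a = xeps * Dual (du a) 0"
    by (cases a) (simp add: xeps_def dualnum_mult)
  then show "\<exists>c. a = xeps * c" ..
qed auto

lemma mult_eq_0_if_re_eq_0: "re a = 0 \<Longrightarrow> re b = 0 \<Longrightarrow> a * b = 0"
  by (cases a, cases b) (simp add: dualnum_mult dualnum_0)

lemma xeps_mult_eq_0_iff: "xeps * a = 0 \<longleftrightarrow> re a = 0"
  by (cases a) (simp add: xeps_def dualnum_mult dualnum_0)

definition inv_of_nat :: "nat \<Rightarrow> dualnum" where
  "inv_of_nat n = Dual (1 / of_nat n) 0"

lemma of_nat_mult_inv_of_nat: "n \<noteq> 0 \<Longrightarrow> of_nat n * inv_of_nat n = 1"
  by (simp add: inv_of_nat_def dualnum_of_nat dualnum_mult dualnum_1)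

lemma re_inv_of_nat_neq_0: "n \<noteq> 0 \<Longrightarrow> re (inv_of_nat n) \<noteq> 0"
  by (simp add: inv_of_nat_def)

lemma inv_of_nat_fact_mult:
  "inv_of_nat (fact m) * inv_of_nat (fact n) = of_nat (m + n choose m) * inv_of_nat (fact (m + n))"
proof -
  have "(of_nat (m + n choose m) :: complex) = fact (m + n) / (fact m * fact n)"
    by (subst binomial_fact) auto
  then show ?thesis
    by (simp add: inv_of_nat_def dualnum_of_nat dualnum_mult field_simps)
qed

section \<open>Evaluation in A[T]\<close>

text \<open>
  X(n, y) \<mapsto> E(y)^n T^n / n!: the divided power relations hold for the divided powers
  T^n / n! of T, which exist since A contains the rationals.
\<close>

definition dp_eval :: "('m \<Rightarrow> dualnum) \<Rightarrow> (dualnum, 'm) dpoly \<Rightarrow> dualnum poly" where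
  "dp_eval E = peval (\<lambda>(n, y). monom (E y ^ n * inv_of_nat (fact n)) n) (\<lambda>a. [:a:])"

interpretation const_poly: coeff_hom "\<lambda>a::'a::comm_ring_1. [:a:]"
  by standard (simp_all add: one_pCons)

lemma dp_eval_0: "dp_eval E 0 = 0"
  unfolding dp_eval_def by (rule const_poly.peval_0)

lemma dp_eval_1: "dp_eval E 1 = 1"
  unfolding dp_eval_def by (rule const_poly.peval_1)

lemma dp_eval_add: "dp_eval E (p + q) = dp_eval E p + dp_eval E q"
  unfolding dp_eval_def by (rule const_poly.peval_add)

lemma dp_eval_diff: "dp_eval E (p - q) = dp_eval E p - dp_eval E q"
  unfolding dp_eval_def by (rule const_poly.peval_diff)

lemma dp_eval_mult: "dp_eval E (p * q) = dp_eval E p * dp_eval E q"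
  unfolding dp_eval_def by (rule const_poly.peval_mult)

lemma dp_eval_sum: "dp_eval E (sum f K) = (\<Sum>i\<in>K. dp_eval E (f i))"
  unfolding dp_eval_def by (rule const_poly.peval_sum)

lemma dp_eval_Cst: "dp_eval E (Cst a) = [:a:]"
  unfolding dp_eval_def by (rule const_poly.peval_Cst)

lemma dp_eval_Xv: "dp_eval E (Xv n y) = monom (E y ^ n * inv_of_nat (fact n)) n"
  unfolding dp_eval_def by (simp add: peval_Xv one_pCons)

lemma dp_eval_Cst_mult_Xv: "dp_eval E (Cst a * Xv n y) = monom (a * E y ^ n * inv_of_nat (fact n)) n"
  by (simp add: dp_eval_mult dp_eval_Cst dp_eval_Xv smult_monom mult.assoc)

lemma dp_eval_rel_X0: "dp_eval E (Xv 0 y - 1) = 0"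
  by (simp add: dp_eval_diff dp_eval_Xv dp_eval_1 inv_of_nat_def dualnum_1 dualnum_mult monom_0 one_pCons)

lemma dp_eval_rel_mult:
  "dp_eval E (Xv m y * Xv n y - Cst (of_nat (m + n choose m)) * Xv (m + n) y) = 0"
proof -
  have "E y ^ m * inv_of_nat (fact m) * (E y ^ n * inv_of_nat (fact n))
      = E y ^ (m + n) * (inv_of_nat (fact m) * inv_of_nat (fact n))"
    by (simp add: power_add mult_ac)
  also have "\<dots> = of_nat (m + n choose m) * E y ^ (m + n) * inv_of_nat (fact (m + n))"
    by (simp add: inv_of_nat_fact_mult mult_ac)
  finally have "E y ^ m * inv_of_nat (fact m) * (E y ^ n * inv_of_nat (fact n))
      = of_nat (m + n choose m) * E y ^ (m + n) * inv_of_nat (fact (m + n))" .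
  then show ?thesis
    by (simp add: dp_eval_diff dp_eval_mult dp_eval_Xv dp_eval_Cst smult_monom mult_monom mult.assoc)
qed

lemma dp_eval_rel_add:
  assumes "E (y + z) = E y + E z"
  shows "dp_eval E (Xv n (y + z) - (\<Sum>i\<le>n. Xv i y * Xv (n - i) z)) = 0"
proof -
  have "dp_eval E (Xv i y * Xv (n - i) z)
      = monom (E y ^ i * E z ^ (n - i) * (of_nat (n choose i) * inv_of_nat (fact n))) n" if "i \<le> n" for i
  proof -
    have "E y ^ i * inv_of_nat (fact i) * (E z ^ (n - i) * inv_of_nat (fact (n - i)))
        = E y ^ i * E z ^ (n - i) * (inv_of_nat (fact i) * inv_of_nat (fact (n - i)))"
      by (simp add: mult_ac)
    also have "\<dots> = E y ^ i * E z ^ (n - i) * (of_nat (n choose i) * inv_of_nat (fact n))"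
      using inv_of_nat_fact_mult[of i "n - i"] that by simp
    finally show ?thesis
      using that by (simp add: dp_eval_mult dp_eval_Xv mult_monom)
  qed
  then have "(\<Sum>i\<le>n. dp_eval E (Xv i y * Xv (n - i) z))
      = (\<Sum>i\<le>n. monom (E y ^ i * E z ^ (n - i) * (of_nat (n choose i) * inv_of_nat (fact n))) n)"
    by simp
  also have "\<dots> = monom ((E y + E z) ^ n * inv_of_nat (fact n)) n"
    by (simp add: monom_sum[symmetric] binomial_ring sum_distrib_left sum_distrib_right mult_ac)
  finally show ?thesis
    by (simp add: dp_eval_diff dp_eval_sum dp_eval_Xv assms)
qed

lemma dp_eval_homog:
  assumes "homog n p"
  shows "\<exists>c. dp_eval E p = monom c n"
proof -
  let ?f = "\<lambda>(n, y). monom (E y ^ n * inv_of_nat (fact n)) n"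
  have "\<exists>c. eval_monomial ?f m = monom c (mdeg m)" for m
  proof (induction m rule: monomial_induct)
    case zero
    show ?case
      by (rule exI[of _ 1]) (simp add: monom_0 one_pCons)
  next
    case (add m v)
    then obtain c where c: "eval_monomial ?f m = monom c (mdeg m)" ..
    obtain k y where v: "v = (k, y)"
      by fastforce
    have "eval_monomial ?f (m + Poly_Mapping.single v 1)
        = monom (c * (E y ^ k * inv_of_nat (fact k))) (mdeg (m + Poly_Mapping.single v 1))"
      by (simp add: v eval_monomial_add c mdeg_add mult_monom)
    then show ?case ..
  qed
  then have "\<forall>m. \<exists>c. eval_monomial ?f m = monom c (mdeg m)" ..
  then obtain c where c: "\<And>m. eval_monomial ?f m = monom (c m) (mdeg m)"
    by (auto simp: choice_iff)
  have "dp_eval E p = (\<Sum>m\<in>Poly_Mapping.keys p. [:Poly_Mapping.lookup p m:] * eval_monomial ?f m)"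
    unfolding dp_eval_def peval_eq_sum_eval_monomial ..
  also have "\<dots> = (\<Sum>m\<in>Poly_Mapping.keys p. monom (Poly_Mapping.lookup p m * c m) n)"
    using assms by (intro sum.cong) (auto simp: homog_def c smult_monom)
  also have "\<dots> = monom (\<Sum>m\<in>Poly_Mapping.keys p. Poly_Mapping.lookup p m * c m) n"
    by (simp add: monom_sum)
  finally show ?thesis ..
qed

text \<open>The factor k! pairs T^k / k! with 1, so that this functional has coefficient sequence f.\<close>

definition dual_of_poly :: "('m \<Rightarrow> dualnum) \<Rightarrow> dualnum poly \<Rightarrow> (dualnum, 'm) dpoly \<Rightarrow> dualnum" where
  "dual_of_poly E f p = (\<Sum>k\<le>degree f. coeff (dp_eval E p) k * of_nat (fact k) * coeff f k)"

lemma dual_of_poly_Xv: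
  assumes "E x0 = 1"
  shows "dual_of_poly E f (Xv k x0) = coeff f k"
proof -
  have "dual_of_poly E f (Xv k x0)
      = (\<Sum>j\<le>degree f. if j = k then of_nat (fact k) * inv_of_nat (fact k) * coeff f k else 0)"
    unfolding dual_of_poly_def dp_eval_Xv assms by (intro sum.cong) (auto simp: coeff_monom)
  also have "\<dots> = coeff f k"
    by (cases "k \<le> degree f") (auto simp: of_nat_mult_inv_of_nat coeff_eq_0)
  finally show ?thesis .
qed

lemma dual_of_poly_in_gdual:
  fixes smul :: "dualnum \<Rightarrow> 'm::ab_group_add \<Rightarrow> 'm" and E :: "'m \<Rightarrow> dualnum"
  assumes "\<And>p. p \<in> dp_ideal smul \<Longrightarrow> dual_of_poly E f p = 0"
  shows "dual_of_poly E f \<in> gdual smul"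
  unfolding gdual_def
proof (intro CollectI conjI allI ballI impI exI[of _ "Suc (degree f)"])
  fix p q :: "(dualnum, 'm) dpoly"
  show "dual_of_poly E f (p + q) = dual_of_poly E f p + dual_of_poly E f q"
    by (simp add: dual_of_poly_def dp_eval_add sum.distrib algebra_simps)
next
  fix a and p :: "(dualnum, 'm) dpoly"
  show "dual_of_poly E f (Cst a * p) = a * dual_of_poly E f p"
    by (simp add: dual_of_poly_def dp_eval_mult dp_eval_Cst sum_distrib_left mult_ac)
next
  fix n and p :: "(dualnum, 'm) dpoly"
  assume "Suc (degree f) \<le> n" "homog n p"
  then show "dual_of_poly E f p = 0"
    using dp_eval_homog[of n p E] by (auto simp: dual_of_poly_def coeff_monom intro!: sum.neutral)
qed (rule assms)

lemma dp_relsE: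
  assumes "s \<in> dp_rels smul"
  obtains x where "s = Xv 0 x - 1"
  | n f x where "s = Xv n (smul f x) - Cst (f ^ n) * Xv n x"
  | m n x where "s = Xv m x * Xv n x - Cst (of_nat (m + n choose m)) * Xv (m + n) x"
  | n x y where "s = Xv n (x + y) - (\<Sum>i\<le>n. Xv i x * Xv (n - i) y)"
  using assms unfolding dp_rels_def by blast

lemma dp_eval_dp_ideal:
  assumes "\<And>s. s \<in> dp_rels smul \<Longrightarrow> dp_eval E s \<in> gen_ideal T" "p \<in> dp_ideal smul"
  shows "dp_eval E p \<in> gen_ideal T"
  using assms(2) unfolding dp_ideal_def
  by (rule gen_ideal_hom_image) (simp_all add: dp_eval_0 dp_eval_add dp_eval_mult assms(1))

section \<open>The dual of Gamma(A)\<close>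

interpretation Gamma_A: dp_cyclic "(*) :: dualnum \<Rightarrow> dualnum \<Rightarrow> dualnum" 1
  by standard simp

lemma dp_eval_id_dp_ideal:
  assumes "p \<in> dp_ideal ((*) :: dualnum \<Rightarrow> dualnum \<Rightarrow> dualnum)"
  shows "dp_eval (\<lambda>a. a) p = 0"
proof -
  have "dp_eval (\<lambda>a. a) s = 0" if "s \<in> dp_rels ((*) :: dualnum \<Rightarrow> dualnum \<Rightarrow> dualnum)" for s
    using that
  proof (cases rule: dp_relsE)
    case (2 n f x)
    then show ?thesis
      by (simp add: dp_eval_diff dp_eval_mult dp_eval_Xv dp_eval_Cst smult_monom power_mult_distrib mult_ac)
  qed (simp_all add: dp_eval_rel_X0 dp_eval_rel_mult dp_eval_rel_add)
  then show ?thesis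
    using dp_eval_dp_ideal[of "(*)" "\<lambda>a. a" "{0}" p] assms by (simp add: gen_ideal_singleton_0 gen_ideal_0)
qed

theorem Gamma_A_dual_iso: "\<exists>\<Psi>. dual_iso ((*) :: dualnum \<Rightarrow> dualnum \<Rightarrow> dualnum) \<Psi> UNIV"
proof (rule exI, rule Gamma_A.dual_iso_dual_coeffs)
  fix f :: "dualnum poly"
  have u: "dual_of_poly (\<lambda>a. a) f \<in> gdual ((*) :: dualnum \<Rightarrow> dualnum \<Rightarrow> dualnum)"
    by (rule dual_of_poly_in_gdual) (simp add: dp_eval_id_dp_ideal dual_of_poly_def)
  moreover have "dual_coeffs 1 (dual_of_poly (\<lambda>a. a) f) = f"
    by (rule poly_eqI) (simp add: coeff_dual_coeffs_gdual[OF u] dual_of_poly_Xv)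
  ultimately show "\<exists>u\<in>gdual ((*) :: dualnum \<Rightarrow> dualnum \<Rightarrow> dualnum). dual_coeffs 1 u = f"
    by blast
qed simp

section \<open>Gamma(M) = A[y]/(xy)\<close>

definition modx_gen :: modx where
  "modx_gen = abs_modx 1"

text \<open>
  The section M = A/(x) = C \<subseteq> A is additive but not A-linear, so X(n, a y) = a^n X(n, y)
  holds after evaluation only modulo (xT).
\<close>

definition modx_lift :: "modx \<Rightarrow> dualnum" where
  "modx_lift y = Dual (re (rep_modx y)) 0"

lemma modx_lift_abs: "modx_lift (abs_modx a) = Dual (re a) 0"
proof -
  have "modrel (rep_modx (abs_modx a)) a"
    by (rule Quotient3_rep_abs[OF Quotient3_modx]) (simp add: modrel_iff)
  then show ?thesis
    by (simp add: modx_lift_def modrel_iff)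
qed

lemma modx_lift_add: "modx_lift (y + z) = modx_lift y + modx_lift z"
  by (induction y rule: modx.abs_induct, induction z rule: modx.abs_induct)
     (simp add: plus_modx.abs_eq modx_lift_abs dualnum_add)

lemma modx_lift_smul: "modx_lift (modx_smul f y) = Dual (re f) 0 * modx_lift y"
  by (induction y rule: modx.abs_induct) (simp add: modx_smul.abs_eq modx_lift_abs dualnum_mult)

lemma modx_lift_gen: "modx_lift modx_gen = 1"
  by (simp add: modx_gen_def modx_lift_abs dualnum_1)

lemma modx_smul_gen: "modx_smul a modx_gen = abs_modx a"
  by (simp add: modx_gen_def modx_smul.abs_eq)

lemma modx_smul_xeps_gen: "modx_smul xeps modx_gen = 0"
  using Quotient3_rel[OF Quotient3_modx, of xeps 0]
  by (simp add: modx_smul_gen zero_modx.abs_eq modrel_iff)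

interpretation Gamma_M: dp_cyclic modx_smul modx_gen
proof
  fix y :: modx
  show "\<exists>a. y = modx_smul a modx_gen"
    by (induction y rule: modx.abs_induct) (auto simp: modx_smul_gen)
qed

lemma gen_ideal_xT_iff:
  "h \<in> gen_ideal {monom xeps 1} \<longleftrightarrow> coeff h 0 = 0 \<and> (\<forall>k. re (coeff h k) = 0)"
proof
  assume "h \<in> gen_ideal {monom xeps 1}"
  then show "coeff h 0 = 0 \<and> (\<forall>k. re (coeff h k) = 0)"
    by (induction rule: gen_ideal_induct) (auto simp: mult.commute[of _ "monom _ _"] coeff_monom_mult)
next
  assume h: "coeff h 0 = 0 \<and> (\<forall>k. re (coeff h k) = 0)"
  have "monom (coeff h i) i \<in> gen_ideal {monom xeps 1}" for i
  proof (cases i)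
    case 0
    then show ?thesis
      using h by (simp add: gen_ideal_0)
  next
    case (Suc j)
    obtain c where "coeff h i = xeps * c"
      using h re_eq_0_iff_xeps_dvd by blast
    then have "monom (coeff h i) i = monom c j * monom xeps 1"
      by (simp add: Suc mult_monom mult.commute)
    then show ?thesis
      by (simp add: gen_ideal_mult_left gen_ideal_gen)
  qed
  then have "(\<Sum>i\<le>degree h. monom (coeff h i) i) \<in> gen_ideal {monom xeps 1}"
    by (rule gen_ideal_sum)
  then show "h \<in> gen_ideal {monom xeps 1}"
    by (simp add: poly_as_sum_of_monoms)
qed

lemma dp_eval_modx_dp_ideal:
  assumes "p \<in> dp_ideal modx_smul"
  shows "dp_eval modx_lift p \<in> gen_ideal {monom xeps 1}"
proof (rule dp_eval_dp_ideal[OF _ assms])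
  fix s assume "s \<in> dp_rels modx_smul"
  then show "dp_eval modx_lift s \<in> gen_ideal {monom xeps 1}"
  proof (cases rule: dp_relsE)
    case (2 n f y)
    define c where "c = (Dual (re f) 0 * modx_lift y) ^ n * inv_of_nat (fact n)
      - f ^ n * modx_lift y ^ n * inv_of_nat (fact n)"
    have "dp_eval modx_lift s = monom c n"
      by (rule poly_eqI)
        (simp add: 2 c_def dp_eval_diff dp_eval_Xv dp_eval_Cst_mult_Xv modx_lift_smul coeff_monom)
    moreover have "re c = 0" "n = 0 \<Longrightarrow> c = 0"
      by (simp_all add: c_def power_mult_distrib)
    ultimately show ?thesis
      unfolding gen_ideal_xT_iff by (auto simp: coeff_monom)
  qed (simp_all add: dp_eval_rel_X0 dp_eval_rel_mult dp_eval_rel_add modx_lift_add gen_ideal_0)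
qed

text \<open>x X(1, x0) = X(1, x x0) = X(1, 0) = 0, and x X(k, x0) = x X(1, x0) X(k - 1, x0) / k.\<close>

lemma xeps_Xv_in_dp_ideal:
  assumes "k \<ge> 1"
  shows "Cst xeps * Xv k modx_gen \<in> dp_ideal modx_smul"
proof -
  have "Xv 1 (0::modx) \<in> dp_ideal modx_smul"
    using dp_rel_smul[where smul = modx_smul and n = 1 and f = 0 and x = modx_gen]
    by (simp add: modx_smul_gen zero_modx.abs_eq)
  moreover have "Xv 1 (0::modx) - Cst xeps * Xv 1 modx_gen \<in> dp_ideal modx_smul"
    using dp_rel_smul[where smul = modx_smul and n = 1 and f = xeps and x = modx_gen]
    by (simp add: modx_smul_xeps_gen)
  ultimately have x1: "Cst xeps * Xv 1 modx_gen \<in> dp_ideal modx_smul"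
    using dp_ideal_diff by fastforce
  have "Xv 1 modx_gen * Xv (k - 1) modx_gen - Cst (of_nat k) * Xv k modx_gen \<in> dp_ideal modx_smul"
    using dp_rel_mult[where smul = modx_smul and m = 1 and n = "k - 1" and x = modx_gen] assms by simp
  then have "Cst xeps * Xv 1 modx_gen * Xv (k - 1) modx_gen
      - Cst xeps * (Xv 1 modx_gen * Xv (k - 1) modx_gen - Cst (of_nat k) * Xv k modx_gen)
      \<in> dp_ideal modx_smul"
    by (rule dp_ideal_diff[OF dp_ideal_mult_right[OF x1] dp_ideal_mult_left])
  then have "Cst (of_nat k) * (Cst xeps * Xv k modx_gen) \<in> dp_ideal modx_smul"
    by (simp add: algebra_simps)
  then have "Cst (inv_of_nat k) * (Cst (of_nat k) * (Cst xeps * Xv k modx_gen)) \<in> dp_ideal modx_smul"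
    by (rule dp_ideal_mult_left)
  moreover have "inv_of_nat k * of_nat k = 1"
    using of_nat_mult_inv_of_nat[of k] assms by (simp add: mult.commute)
  ultimately show ?thesis
    by (simp add: mult.assoc[symmetric] Cst_mult)
qed

lemma gen_ideal_xT_monom_coeff:
  "h \<in> gen_ideal {monom xeps 1} \<Longrightarrow> monom (coeff h j) j \<in> gen_ideal {monom xeps 1}"
  unfolding gen_ideal_xT_iff by (simp add: coeff_monom)

lemma Cst_mult_Xv_modx_in_dp_ideal:
  assumes "dp_eval modx_lift (Cst c * Xv k modx_gen) \<in> gen_ideal {monom xeps 1}"
  shows "Cst c * Xv k modx_gen \<in> dp_ideal modx_smul"
proof -
  have J: "coeff (monom (c * inv_of_nat (fact k)) k) 0 = 0" "re (c * inv_of_nat (fact k)) = 0"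
    using assms unfolding dp_eval_Cst_mult_Xv modx_lift_gen gen_ideal_xT_iff
    by (auto dest: spec[of _ k])
  show ?thesis
  proof (cases "k = 0")
    case True
    moreover have "inv_of_nat (fact 0) = 1"
      by (simp add: inv_of_nat_def dualnum_1)
    ultimately show ?thesis
      using J(1) by (simp add: dp_ideal_0)
  next
    case False
    have "re c = 0"
      using J(2) re_inv_of_nat_neq_0[of "fact k"] by simp
    then obtain d where "c = xeps * d"
      using re_eq_0_iff_xeps_dvd by blast
    then show ?thesis
      using dp_ideal_mult_left[OF xeps_Xv_in_dp_ideal, of k "Cst d"] False
      by (simp add: Cst_mult[symmetric] mult_ac)
  qed
qed

lemma dp_eval_modx_in_ideal_iff:
  "dp_eval modx_lift p \<in> gen_ideal {monom xeps 1} \<longleftrightarrow> p \<in> dp_ideal modx_smul"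
proof
  assume P: "dp_eval modx_lift p \<in> gen_ideal {monom xeps 1}"
  obtain c N where cong: "dp_cong modx_smul p (\<Sum>k<N. Cst (c k) * Xv k modx_gen)"
    using Gamma_M.dp_cong_Xv_combination by blast
  have "dp_eval modx_lift (p - (\<Sum>k<N. Cst (c k) * Xv k modx_gen)) \<in> gen_ideal {monom xeps 1}"
    using cong unfolding dp_cong_def by (rule dp_eval_modx_dp_ideal)
  with P have "dp_eval modx_lift p - dp_eval modx_lift (p - (\<Sum>k<N. Cst (c k) * Xv k modx_gen))
      \<in> gen_ideal {monom xeps 1}"
    by (rule gen_ideal_diff)
  then have "(\<Sum>k<N. monom (c k * inv_of_nat (fact k)) k) \<in> gen_ideal {monom xeps 1}"
    by (simp add: dp_eval_diff dp_eval_sum dp_eval_Cst_mult_Xv modx_lift_gen)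
  then have coeffs: "monom (coeff (\<Sum>k<N. monom (c k * inv_of_nat (fact k)) k) j) j
      \<in> gen_ideal {monom xeps 1}" for j
    by (rule gen_ideal_xT_monom_coeff)
  have "dp_eval modx_lift (Cst (c k) * Xv k modx_gen) \<in> gen_ideal {monom xeps 1}" if "k < N" for k
    using coeffs[of k] that by (simp add: coeff_sum coeff_monom dp_eval_Cst_mult_Xv modx_lift_gen)
  then have "(\<Sum>k<N. Cst (c k) * Xv k modx_gen) \<in> dp_ideal modx_smul"
    by (intro dp_ideal_sum Cst_mult_Xv_modx_in_dp_ideal) simp
  then show "p \<in> dp_ideal modx_smul"
    using dp_cong_ideal_iff[OF cong] by blast
qed (rule dp_eval_modx_dp_ideal)

lemma dp_eval_modx_surj: "dp_eval modx_lift (\<Sum>k\<le>degree q. Cst (coeff q k * of_nat (fact k)) * Xv k modx_gen) = q"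
proof -
  have "dp_eval modx_lift (\<Sum>k\<le>degree q. Cst (coeff q k * of_nat (fact k)) * Xv k modx_gen)
      = (\<Sum>k\<le>degree q. monom (coeff q k) k)"
    by (simp add: dp_eval_sum dp_eval_Cst_mult_Xv modx_lift_gen mult.assoc of_nat_mult_inv_of_nat)
  then show ?thesis
    by (simp add: poly_as_sum_of_monoms)
qed

theorem Gamma_M_quotient: "\<exists>\<phi>. gamma_quot_iso modx_smul \<phi> (gen_ideal {monom xeps 1})"
proof (intro exI[of _ "dp_eval modx_lift"], unfold gamma_quot_iso_def, intro conjI allI impI)
  fix q :: "dualnum poly"
  let ?p = "\<Sum>k\<le>degree q. Cst (coeff q k * of_nat (fact k)) * Xv k modx_gen"
  have "dp_eval modx_lift ?p - q \<in> gen_ideal {monom xeps 1}"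
    unfolding dp_eval_modx_surj by (simp only: diff_self gen_ideal_0)
  then show "\<exists>p. dp_eval modx_lift p - q \<in> gen_ideal {monom xeps 1}" ..
next
  fix n and p :: "(dualnum, modx) dpoly"
  assume "homog n p"
  then obtain c where "dp_eval modx_lift p = monom c n"
    using dp_eval_homog by blast
  then show "\<exists>c. dp_eval modx_lift p - monom c n \<in> gen_ideal {monom xeps 1}"
    by (intro exI[of _ c]) (simp add: gen_ideal_0)
qed (simp_all only: dp_eval_add dp_eval_mult dp_eval_Cst dp_eval_modx_in_ideal_iff)

section \<open>The dual of Gamma(M) = A[xT, xT^2, \<dots>]\<close>

lemma palg_sum: "(\<And>i. i \<in> K \<Longrightarrow> f i \<in> palg G) \<Longrightarrow> sum f K \<in> palg G"
  by (induction K rule: infinite_finite_induct) (auto intro: palg.add palg.const[of 0, simplified])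

lemma palg_xT_iff: "f \<in> palg {monom xeps k | k. k \<ge> 1} \<longleftrightarrow> (\<forall>k\<ge>1. re (coeff f k) = 0)"
proof
  assume "f \<in> palg {monom xeps k | k. k \<ge> 1}"
  then show "\<forall>k\<ge>1. re (coeff f k) = 0"
  proof (induction rule: palg.induct)
    case (const a)
    then show ?case
      by (simp add: coeff_pCons split: nat.split)
  next
    case (gen g)
    then show ?case
      by (auto simp: coeff_monom)
  next
    case (add f g)
    then show ?case
      by simp
  next
    case (mult f g)
    show ?case
    proof (intro allI impI)
      fix k :: nat assume "k \<ge> 1"
      then have "re (coeff f i) * re (coeff g (k - i)) = 0" for i
        using mult.IH by (cases "i \<ge> 1") auto
      then show "re (coeff (f * g) k) = 0"
        by (simp add: coeff_mult re_sum sum.neutral del: mult_eq_0_iff)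
    qed
  qed
next
  assume f: "\<forall>k\<ge>1. re (coeff f k) = 0"
  have "monom (coeff f i) i \<in> palg {monom xeps k | k. k \<ge> 1}" for i
  proof (cases "i = 0")
    case True
    then show ?thesis
      by (simp add: monom_0 palg.const)
  next
    case False
    then have "re (coeff f i) = 0"
      using f by simp
    then obtain d where "coeff f i = xeps * d"
      using re_eq_0_iff_xeps_dvd by blast
    then have "monom (coeff f i) i = [:d:] * monom xeps i"
      by (simp add: smult_monom mult.commute)
    moreover have "monom xeps i \<in> palg {monom xeps k | k. k \<ge> 1}"
      using False by (intro palg.gen) auto
    ultimately show ?thesis
      using palg.mult[OF palg.const[of d]] by simp
  qed
  then have "(\<Sum>i\<le>degree f. monom (coeff f i) i) \<in> palg {monom xeps k | k. k \<ge> 1}"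
    by (rule palg_sum)
  then show "f \<in> palg {monom xeps k | k. k \<ge> 1}"
    by (simp add: poly_as_sum_of_monoms)
qed

lemma gdual_modx_re_coeff:
  assumes "u \<in> gdual modx_smul" "k \<ge> 1"
  shows "re (u (Xv k modx_gen)) = 0"
proof -
  have "xeps * u (Xv k modx_gen) = 0"
    using gdualD(3)[OF assms(1) xeps_Xv_in_dp_ideal[OF assms(2)]] gdualD(2)[OF assms(1)] by simp
  then show ?thesis
    by (simp add: xeps_mult_eq_0_iff)
qed

lemma dual_of_poly_modx_in_gdual:
  assumes f: "\<forall>k\<ge>1. re (coeff f k) = 0"
  shows "dual_of_poly modx_lift f \<in> gdual modx_smul"
proof (rule dual_of_poly_in_gdual)
  fix p :: "(dualnum, modx) dpoly"
  assume "p \<in> dp_ideal modx_smul"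
  then have h: "coeff (dp_eval modx_lift p) 0 = 0" "\<And>k. re (coeff (dp_eval modx_lift p) k) = 0"
    using dp_eval_modx_dp_ideal unfolding gen_ideal_xT_iff by blast+
  have "coeff (dp_eval modx_lift p) k * of_nat (fact k) * coeff f k = 0" for k
    using h f by (cases "k = 0") (auto intro: mult_eq_0_if_re_eq_0)
  then show "dual_of_poly modx_lift f p = 0"
    by (simp add: dual_of_poly_def)
qed

theorem Gamma_M_dual_iso: "\<exists>\<Phi>. dual_iso modx_smul \<Phi> (palg {monom xeps k | k. k \<ge> 1})"
proof (rule exI, rule Gamma_M.dual_iso_dual_coeffs)
  fix u assume "u \<in> gdual modx_smul"
  then show "dual_coeffs modx_gen u \<in> palg {monom xeps k | k. k \<ge> 1}"
    unfolding palg_xT_iff by (simp add: coeff_dual_coeffs_gdual gdual_modx_re_coeff)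
next
  fix f assume "f \<in> palg {monom xeps k | k. k \<ge> 1}"
  then have f: "\<forall>k\<ge>1. re (coeff f k) = 0"
    unfolding palg_xT_iff .
  have "dual_coeffs modx_gen (dual_of_poly modx_lift f) = f"
    by (rule poly_eqI)
       (simp add: coeff_dual_coeffs_gdual[OF dual_of_poly_modx_in_gdual[OF f]] dual_of_poly_Xv modx_lift_gen)
  then show "\<exists>u\<in>gdual modx_smul. dual_coeffs modx_gen u = f"
    using dual_of_poly_modx_in_gdual[OF f] by blast
qed

section \<open>Non-generation\<close>

text \<open>
  Since x^2 = 0, the dual elements vanishing above degree D whose positive degree
  coefficients lie in (x) form a subalgebra.
\<close>

lemma dsubalg_vanishes_above:
  assumes "u \<in> dsubalg G" "G \<subseteq> gdual modx_smul" "\<And>g k. g \<in> G \<Longrightarrow> k > D \<Longrightarrow> g (Xv k modx_gen) = 0"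
  shows "(\<forall>k>D. u (Xv k modx_gen) = 0) \<and> (\<forall>k\<ge>1. re (u (Xv k modx_gen)) = 0)"
  using assms(1)
proof (induction rule: dsubalg.induct)
  case (unit a)
  then show ?case
    by (simp add: dunit_Xv)
next
  case (gen g)
  then have "g \<in> gdual modx_smul"
    using assms(2) by blast
  then show ?case
    using gen assms(3) gdual_modx_re_coeff by simp
next
  case (mult u v)
  then have u: "\<And>k. k > D \<Longrightarrow> u (Xv k modx_gen) = 0" "\<And>k. k \<ge> 1 \<Longrightarrow> re (u (Xv k modx_gen)) = 0"
    and v: "\<And>k. k > D \<Longrightarrow> v (Xv k modx_gen) = 0" "\<And>k. k \<ge> 1 \<Longrightarrow> re (v (Xv k modx_gen)) = 0"
    by auto
  have "u (Xv i modx_gen) * v (Xv (k - i) modx_gen) = 0" if "k > D" "i \<le> k" for i k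
  proof -
    consider "i = 0" | "i = k" | "1 \<le> i" "1 \<le> k - i"
      using \<open>i \<le> k\<close> by linarith
    then show ?thesis
      using that by cases (simp_all add: u v mult_eq_0_if_re_eq_0)
  qed
  moreover have "re (u (Xv i modx_gen)) * re (v (Xv (k - i) modx_gen)) = 0" if "k \<ge> 1" "i \<le> k" for i k
    using that u(2) v(2) by (cases "i \<ge> 1") simp_all
  ultimately show ?case
    by (simp add: dprod_Xv re_sum sum.neutral del: mult_eq_0_iff)
qed simp_all

text \<open>The functional xT^(D+1) of the dual does not vanish above degree D.\<close>

lemma dsubalg_neq_gdual_modx:
  assumes "G \<subseteq> gdual modx_smul" "\<And>g k. g \<in> G \<Longrightarrow> k > D \<Longrightarrow> g (Xv k modx_gen) = 0"
  shows "dsubalg G \<noteq> gdual modx_smul"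
proof
  let ?u = "dual_of_poly modx_lift (monom xeps (Suc D))"
  assume "dsubalg G = gdual modx_smul"
  moreover have "?u \<in> gdual modx_smul"
    by (rule dual_of_poly_modx_in_gdual) (simp add: coeff_monom)
  ultimately have "?u \<in> dsubalg G"
    by simp
  then have "?u (Xv (Suc D) modx_gen) = 0"
    using dsubalg_vanishes_above[OF _ assms(1)] assms(2) by blast
  then show False
    by (simp add: dual_of_poly_Xv modx_lift_gen xeps_neq_0)
qed

theorem gdual_modx_not_generated_in_degree_1:
  "dsubalg {u \<in> gdual modx_smul. dhomog 1 u} \<noteq> gdual modx_smul"
proof (rule dsubalg_neq_gdual_modx[where D = 1])
  fix g and k :: nat
  assume "g \<in> {u \<in> gdual modx_smul. dhomog 1 u}" "1 < k"
  then have "dhomog 1 g" "k \<noteq> 1"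
    by auto
  then show "g (Xv k modx_gen) = 0"
    using homog_Xv[of k modx_gen] unfolding dhomog_def by blast
qed blast

theorem gdual_modx_not_finitely_generated:
  "\<not> (\<exists>G. G \<subseteq> gdual modx_smul \<and> finite G \<and> dsubalg G = gdual modx_smul)"
proof
  assume "\<exists>G. G \<subseteq> gdual modx_smul \<and> finite G \<and> dsubalg G = gdual modx_smul"
  then obtain G where G: "G \<subseteq> gdual modx_smul" "finite G" "dsubalg G = gdual modx_smul"
    by blast
  moreover obtain D where "\<forall>g\<in>G. \<forall>k>D. g (Xv k modx_gen) = 0"
    using gdual_finite_common_bound[OF G(2,1)] by blast
  ultimately show False
    using dsubalg_neq_gdual_modx[of G D] by simp
qed

theorem mainTheorem18:
  shows "(\<exists>\<phi>. gamma_quot_iso modx_smul \<phi> (gen_ideal {monom xeps 1}))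
    \<and> (\<exists>\<Psi>. dual_iso ((*) :: dualnum \<Rightarrow> dualnum \<Rightarrow> dualnum) \<Psi> UNIV)
    \<and> (\<exists>\<Phi>. dual_iso modx_smul \<Phi> (palg {monom xeps k | k. k \<ge> 1}))
    \<and> dsubalg {u \<in> gdual modx_smul. dhomog 1 u} \<noteq> gdual modx_smul
    \<and> \<not> (\<exists>G. G \<subseteq> gdual modx_smul \<and> finite G \<and> dsubalg G = gdual modx_smul)"
  using Gamma_M_quotient Gamma_A_dual_iso Gamma_M_dual_iso
    gdual_modx_not_generated_in_degree_1 gdual_modx_not_finitely_generated
  by blast

end
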